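(* For $i=0,1,2,\dots$ let $D_i=\{(v_0,\dots,v_i)\in\mathbb{R}^{i+1}:\ 0\le v_i\le\cdots\le v_0\}$, and let $\varphi_i:D_i\to\mathbb{R}$ be functions that are positive and do not exceed $1$ on $D_i$. Suppose there exist functions $\psi_i:D_i\to\mathbb{R}$ with $$0<\psi_i(v_0,\dots,v_i)\le\varphi_i(v_0,\dots,v_i)\le 1\quad\text{on } D_i,\qquad i=0,1,2,\dots,$$ which are monotone decreasing in the set of their arguments, i.e. $v_0\le u_0,\dots,v_i\le u_i$ implies $\psi_i(v_0,\dots,v_i)\ge\psi_i(u_0,\dots,u_i)$. Let $\{V_i\}_{i=0}^\infty$ be a positive numeric sequence defined recurrently by $$V_{i+1}-V_i=-\varphi_i(V_0,\dots,V_i)\,V_i,\qquad i=0,1,2,\dots$$ Then the sequence $\{U_i\}_{i=0}^\infty$ defined by $U_0=V_0$ and $$U_{i+1}-U_i=-\psi_i(U_0,\dots,U_i)\,U_i,\qquad i=0,1,2,\dots$$ is majorizing: $V_i\le U_i$ for all $i=1,2,3,\dots$ *)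

theory Defs
  imports Complex_Main
begin

definition D :: "nat \<Rightarrow> real list set" where
  "D i = {v. length v = Suc i \<and> (\<forall>j<i. v ! Suc j \<le> v ! j) \<and> 0 \<le> v ! i}"

definition prefix_vec :: "(nat \<Rightarrow> real) \<Rightarrow> nat \<Rightarrow> real list" where
  "prefix_vec x i = map x [0..<Suc i]"

end

theory Submission
  imports Defs
begin

text \<open>Both recursions have the form x (i+1) = (1 - f) x i with 0 \<le> f \<le> 1 on D, so both sequences
  are nonnegative and nonincreasing and their prefixes lie in D. By induction, if V j \<le> U j for
  all j \<le> i, then monotonicity of \<psi> gives \<psi>(U_0..U_i) \<le> \<psi>(V_0..V_i) \<le> \<phi>(V_0..V_i), and
  V (i+1) = (1 - \<phi>) V i \<le> (1 - \<psi>(U_0..U_i)) V i \<le> (1 - \<psi>(U_0..U_i)) U i = U (i+1).\<close>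

lemma prefix_vec_nth: "j \<le> i \<Longrightarrow> prefix_vec x i ! j = x j"
  by (simp add: prefix_vec_def del: upt_Suc)

lemma prefix_vec_in_D:
  assumes "\<And>j. j < i \<Longrightarrow> x (Suc j) \<le> x j" and "0 \<le> x i"
  shows "prefix_vec x i \<in> D i"
  using assms by (simp add: D_def prefix_vec_nth) (simp add: prefix_vec_def)

lemma damped_sequence_prefix_in_D:
  fixes f :: "nat \<Rightarrow> real list \<Rightarrow> real" and x :: "nat \<Rightarrow> real"
  assumes f_bounds: "\<And>i v. v \<in> D i \<Longrightarrow> 0 \<le> f i v \<and> f i v \<le> 1"
    and rec: "\<And>i. x (Suc i) - x i = - f i (prefix_vec x i) * x i"
    and x0: "0 \<le> x 0"
  shows "prefix_vec x n \<in> D n"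
proof -
  have "0 \<le> x n \<and> (\<forall>j<n. x (Suc j) \<le> x j)"
  proof (induction n)
    case 0
    then show ?case using x0 by simp
  next
    case (Suc n)
    have "prefix_vec x n \<in> D n"
      using Suc.IH by (intro prefix_vec_in_D) auto
    then have "0 \<le> f n (prefix_vec x n)" "f n (prefix_vec x n) \<le> 1"
      using f_bounds by auto
    moreover have "x (Suc n) = (1 - f n (prefix_vec x n)) * x n"
      using rec[of n] by (simp add: algebra_simps)
    ultimately have "0 \<le> x (Suc n)" "x (Suc n) \<le> x n"
      using Suc.IH by (auto simp: mult_left_le_one_le)
    then show ?case
      using Suc.IH by (auto simp: less_Suc_eq)
  qed
  then show ?thesis
    by (intro prefix_vec_in_D) auto
qed

lemma damped_step_le:
  fixes b p u v :: real
  assumes "b \<le> p" "b \<le> 1" "0 \<le> v" "v \<le> u"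
  shows "(1 - p) * v \<le> (1 - b) * u"
proof -
  have "(1 - p) * v \<le> (1 - b) * v"
    using assms by (intro mult_right_mono) auto
  also have "\<dots> \<le> (1 - b) * u"
    using assms by (intro mult_left_mono) auto
  finally show ?thesis .
qed

theorem lemma2:
  fixes \<phi> \<psi> :: "nat \<Rightarrow> real list \<Rightarrow> real" and V U :: "nat \<Rightarrow> real"
  assumes phi_bounds: "\<And>i v. v \<in> D i \<Longrightarrow> 0 < \<phi> i v \<and> \<phi> i v \<le> 1"
    and psi_bounds: "\<And>i v. v \<in> D i \<Longrightarrow> 0 < \<psi> i v \<and> \<psi> i v \<le> \<phi> i v"
    and psi_mono: "\<And>i v u. v \<in> D i \<Longrightarrow> u \<in> D i \<Longrightarrow> (\<forall>j\<le>i. v ! j \<le> u ! j)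
                      \<Longrightarrow> \<psi> i u \<le> \<psi> i v"
    and V_pos: "\<And>i. V i > 0"
    and V_rec: "\<And>i. V (Suc i) - V i = - \<phi> i (prefix_vec V i) * V i"
    and U0: "U 0 = V 0"
    and U_rec: "\<And>i. U (Suc i) - U i = - \<psi> i (prefix_vec U i) * U i"
  shows "\<forall>i\<ge>1. V i \<le> U i"
proof -
  have psi_le_one: "\<psi> i v \<le> 1" if "v \<in> D i" for i v
    using phi_bounds[OF that] psi_bounds[OF that] by linarith
  have VD: "prefix_vec V n \<in> D n" for n
    using phi_bounds V_rec V_pos[of 0]
    by (intro damped_sequence_prefix_in_D[of \<phi>]) (auto simp: less_imp_le)
  have UD: "prefix_vec U n \<in> D n" for n
    using psi_bounds psi_le_one U_rec U0 V_pos[of 0]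
    by (intro damped_sequence_prefix_in_D[of \<psi>]) (auto simp: less_imp_le)
  have "\<forall>j\<le>n. V j \<le> U j" for n
  proof (induction n)
    case 0
    then show ?case using U0 by simp
  next
    case (Suc n)
    have "\<psi> n (prefix_vec U n) \<le> \<psi> n (prefix_vec V n)"
      using psi_mono[OF VD UD] Suc.IH by (simp add: prefix_vec_nth)
    then have "(1 - \<phi> n (prefix_vec V n)) * V n \<le> (1 - \<psi> n (prefix_vec U n)) * U n"
      using psi_bounds[OF VD, of n] psi_le_one[OF UD, of n] V_pos[of n] Suc.IH
      by (intro damped_step_le) (auto intro: order_trans)
    then have "V (Suc n) \<le> U (Suc n)"
      using V_rec[of n] U_rec[of n] by (simp add: algebra_simps)
    then show ?case
      using Suc.IH by (auto simp: le_Suc_eq)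
  qed
  then show ?thesis by blast
qed

end
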